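(* Let $\mu$ be a Krull valuation on $\overline{\mathbb{K}}[x]$, let $f\in\overline{\mathbb{K}}[x]$ be non-constant and $a$ an optimizing root of $f$. If $g\in\overline{\mathbb{K}}[x]$ is non-constant with $\delta(g)<\delta(f)$, then $g(a)\neq 0$, $$\mu_{x-a}(g)=\mu(g)=\mu(g(a)),$$ and $\mu_{x-a}(g/g(a))=0$ with residue $\left(g/g(a)\right)\mu_{x-a}=1$ in the residue field of $\mu_{x-a}$ on $\overline{\mathbb{K}}(x)$. Moreover, if $\mathbb{K}\subseteq\overline{\mathbb{K}}$ is a subfield with $\overline{\mathbb{K}}$ its algebraic closure, $Q\in\mathbb{K}[x]$ is a key polynomial for the restriction $\nu=\mu|_{\mathbb{K}[x]}$ and $a$ is an optimizing root of $Q$, then $\mu_{x-a}(Q)=\mu(Q)$.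
   Context: For non-constant $f\in\overline{\mathbb{K}}[x]$, $\delta(f)=\max\{\mu(x-c):f(c)=0\}$, and a root $c$ with $\mu(x-c)=\delta(f)$ is an optimizing root. $\mu_{x-a}$ is the truncation of $\mu$ at $x-a$: $\mu_{x-a}(\sum_i c_i(x-a)^i)=\min_i\{\mu(c_i)+i\mu(x-a)\}$, a valuation on $\overline{\mathbb{K}}[x]$ extended to $\overline{\mathbb{K}}(x)$. Key polynomials: for nonzero $f\in\mathbb{K}[x]$, with Hasse derivatives $\partial_bf=\sum_{i\ge b}\binom{i}{b}a_ix^{i-b}$ for $f=\sum a_ix^i$, $\epsilon(f)=\max_{1\le b\le\deg f}(\nu(f)-\nu(\partial_bf))/b$ if $\deg f>0$ and $\epsilon(f)=-\infty$ if $f$ is constant; a monic $Q$ is a key polynomial for $\nu$ if $\epsilon(f)\ge\epsilon(Q)$ implies $\deg f\ge\deg Q$ for all $f$. *)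

theory Defs
  imports "HOL-Computational_Algebra.Polynomial"
begin

text \<open>Krull valuation on the polynomial ring k[x] (k = algebraically closed field),
  with values in an ordered abelian group; the axioms are imposed on nonzero
  polynomials (mu 0 = infinity is not represented: trivial support).\<close>
definition krull_valuation :: "('k::field poly \<Rightarrow> 'g::linordered_ab_group_add) \<Rightarrow> bool" where
  "krull_valuation \<mu> \<longleftrightarrow>
     (\<forall>f g. f \<noteq> 0 \<longrightarrow> g \<noteq> 0 \<longrightarrow> \<mu> (f * g) = \<mu> f + \<mu> g) \<and>
     (\<forall>f g. f \<noteq> 0 \<longrightarrow> g \<noteq> 0 \<longrightarrow> f + g \<noteq> 0 \<longrightarrow> min (\<mu> f) (\<mu> g) \<le> \<mu> (f + g))"

definition nsmul :: "nat \<Rightarrow> 'g::ab_group_add \<Rightarrow> 'g" where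
  "nsmul n \<gamma> = (\<Sum>j<n. \<gamma>)"

definition delta :: "('k::field poly \<Rightarrow> 'g::linorder) \<Rightarrow> 'k poly \<Rightarrow> 'g" where
  "delta \<mu> f = Max ((\<lambda>c. \<mu> [:-c, 1:]) ` {c. poly f c = 0})"

definition optimizing_root :: "('k::field poly \<Rightarrow> 'g::linorder) \<Rightarrow> 'k poly \<Rightarrow> 'k \<Rightarrow> bool" where
  "optimizing_root \<mu> f a \<longleftrightarrow> poly f a = 0 \<and> \<mu> [:-a, 1:] = delta \<mu> f"

text \<open>Truncation of mu at x - a: writing g = sum_i c_i (x-a)^i (so c_i are the
  coefficients of g(x+a)), mu_{x-a}(g) = min_i (mu(c_i) + i mu(x-a)) over c_i nonzero.\<close>
definition trunc_val :: "('k::field poly \<Rightarrow> 'g::linordered_ab_group_add) \<Rightarrow> 'k \<Rightarrow> 'k poly \<Rightarrow> 'g" where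
  "trunc_val \<mu> a g = Min {\<mu> [:coeff (pcompose g [:a, 1:]) i:] + nsmul i (\<mu> [:-a, 1:]) | i.
                          i \<le> degree g \<and> coeff (pcompose g [:a, 1:]) i \<noteq> 0}"

definition hasse :: "nat \<Rightarrow> 'k::field poly \<Rightarrow> 'k poly" where
  "hasse b f = (\<Sum>i\<in>{b..degree f}. monom (of_nat (i choose b) * coeff f i) (i - b))"

text \<open>The terms (nu f - nu(hasse_b f), b) representing the fractions
  (nu f - nu(hasse_b f))/b whose maximum is epsilon(f); terms with
  hasse_b f = 0 have value -infinity and are omitted.\<close>
definition eps_terms :: "('k::field poly \<Rightarrow> 'g::linordered_ab_group_add) \<Rightarrow> 'k poly \<Rightarrow> ('g \<times> nat) set" where
  "eps_terms \<nu> f = {(\<nu> f - \<nu> (hasse b f), b) | b. 1 \<le> b \<and> b \<le> degree f \<and> hasse b f \<noteq> 0}"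

text \<open>epsilon(f) >= epsilon(Q), with epsilon(constant) = -infinity; the comparison
  of the fractions gamma/b >= gamma'/b' is done as b' gamma >= b gamma'
  (i.e. in the divisible hull of the value group).\<close>
definition eps_ge :: "('k::field poly \<Rightarrow> 'g::linordered_ab_group_add) \<Rightarrow> 'k poly \<Rightarrow> 'k poly \<Rightarrow> bool" where
  "eps_ge \<nu> f Q \<longleftrightarrow> degree Q = 0 \<or>
     (0 < degree f \<and> (\<exists>(\<gamma>, b) \<in> eps_terms \<nu> f. \<forall>(\<gamma>', b') \<in> eps_terms \<nu> Q.
         nsmul b \<gamma>' \<le> nsmul b' \<gamma>))"

definition subfield :: "'k::field set \<Rightarrow> bool" where
  "subfield K \<longleftrightarrow> 0 \<in> K \<and> 1 \<in> K \<and> (\<forall>x\<in>K. \<forall>y\<in>K. x + y \<in> K \<and> x * y \<in> K \<and> - x \<in> K) \<and>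
     (\<forall>x\<in>K. inverse x \<in> K)"

definition polys_over :: "'k::field set \<Rightarrow> 'k poly set" where
  "polys_over K = {p. \<forall>i. coeff p i \<in> K}"

text \<open>the ambient field (of type 'k, algebraically closed) is algebraic over K,
  hence it is the algebraic closure of K\<close>
definition algebraic_over :: "'k::field set \<Rightarrow> bool" where
  "algebraic_over K \<longleftrightarrow> (\<forall>z. \<exists>p \<in> polys_over K. p \<noteq> 0 \<and> poly p z = 0)"

definition key_polynomial :: "('k::field poly \<Rightarrow> 'g::linordered_ab_group_add) \<Rightarrow> 'k set \<Rightarrow> 'k poly \<Rightarrow> bool" where
  "key_polynomial \<nu> K Q \<longleftrightarrow> Q \<in> polys_over K \<and> lead_coeff Q = 1 \<and>
     (\<forall>f \<in> polys_over K. f \<noteq> 0 \<longrightarrow> eps_ge \<nu> f Q \<longrightarrow> degree Q \<le> degree f)"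

end

theory Submission
  imports Defs
begin

text \<open>Expanding in powers of \<open>x - a\<close>, the truncation \<open>\<mu>\<^sub>x\<^sub>-\<^sub>a\<close> is the Gauss valuation
  with weight \<open>l = \<mu>(x - a)\<close> of \<open>g(x + a)\<close>; by the ultrametric inequality it never exceeds \<open>\<mu>\<close>,
  and like \<open>\<mu>\<close> it can be controlled factor by factor once \<open>g\<close> is split into linear factors.
  If every root \<open>r\<close> of \<open>g\<close> has \<open>\<mu>(x - r) < l\<close>, then \<open>\<mu>(a - r) = \<mu>(x - r)\<close>, so \<open>\<mu>(g) = \<mu>(g(a))\<close>,
  and the normalised factor \<open>(x + a - r)/(a - r) = 1 + x/(a - r)\<close> has a linear term of positive
  weight; products of such 1-units are 1-units, which gives the claims about \<open>g/g(a)\<close>.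
  If only \<open>\<mu>(x - r) \<le> \<mu>(x - b)\<close>, as for an optimizing root \<open>b\<close>, the factor \<open>x + (b - r)\<close> of
  \<open>Q(x + b)\<close> still has Gauss valuation at least \<open>\<mu>(x - r)\<close>, whence \<open>\<mu>\<^sub>x\<^sub>-\<^sub>b(Q) \<ge> \<mu>(Q)\<close>.\<close>

lemma nsmul_0 [simp]: "nsmul 0 \<gamma> = 0"
  by (simp add: nsmul_def)

lemma nsmul_Suc [simp]: "nsmul (Suc n) \<gamma> = nsmul n \<gamma> + \<gamma>"
  by (simp add: nsmul_def add.commute)

lemma linear_factor_induct [consumes 2, case_names const linear]:
  fixes p :: "'k::alg_closed_field poly"
  assumes "p \<noteq> 0" "\<forall>r. poly p r = 0 \<longrightarrow> R r"
    and const: "\<And>c. c \<noteq> 0 \<Longrightarrow> P [:c:]"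
    and linear: "\<And>r q. R r \<Longrightarrow> q \<noteq> 0 \<Longrightarrow> P q \<Longrightarrow> P ([:-r, 1:] * q)"
  shows "P p"
  using assms(1,2)
proof (induction "degree p" arbitrary: p rule: less_induct)
  case less
  show ?case
  proof (cases "degree p = 0")
    case True
    then show ?thesis
      using less.prems const by (metis degree_eq_zeroE pCons_eq_0_iff)
  next
    case False
    then obtain r where r: "poly p r = 0"
      using alg_closed_imp_poly_has_root by blast
    then obtain q where p: "p = [:-r, 1:] * q"
      by (metis dvdE poly_eq_0_iff_dvd)
    with less.prems have "q \<noteq> 0"
      by auto
    then have "degree q < degree p"
      unfolding p by (subst degree_mult_eq) auto
    moreover have "\<forall>s. poly q s = 0 \<longrightarrow> R s"
      using less.prems(2) p by simp
    ultimately have "P q"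
      using less.hyps \<open>q \<noteq> 0\<close> by blast
    then show ?thesis
      unfolding p using linear less.prems(2) r \<open>q \<noteq> 0\<close> by blast
  qed
qed

lemma pcompose_linear: "pcompose [:-r, 1:] [:b, 1:] = [:b - r, 1::'a::comm_ring_1:]"
  by (simp add: pcompose_pCons)

lemma pcompose_normalized_linear_factor:
  fixes a r c :: "'k::field"
  assumes "a \<noteq> r"
  shows "pcompose (smult (inverse ((a - r) * c)) ([:-r, 1:] * q)) [:a, 1:]
    = [:1, inverse (a - r):] * pcompose (smult (inverse c) q) [:a, 1:]"
proof -
  have "smult (inverse ((a - r) * c)) ([:-r, 1:] * q)
      = smult (inverse (a - r)) [:-r, 1:] * smult (inverse c) q"
    by (simp only: mult_smult_left mult_smult_right smult_smult inverse_mult_distrib mult.commute)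
  moreover have "pcompose (smult (inverse (a - r)) [:-r, 1:]) [:a, 1:] = [:1, inverse (a - r):]"
    using assms by (simp only: pcompose_smult pcompose_linear) simp
  ultimately show ?thesis
    by (simp only: pcompose_mult)
qed

context
  fixes \<mu> :: "'k::field poly \<Rightarrow> 'g::linordered_ab_group_add"
  assumes val: "krull_valuation \<mu>"
begin

lemma val_mult: "p \<noteq> 0 \<Longrightarrow> q \<noteq> 0 \<Longrightarrow> \<mu> (p * q) = \<mu> p + \<mu> q"
  using val by (simp add: krull_valuation_def)

lemma val_add_ge:
  assumes "p + q \<noteq> 0" "p \<noteq> 0 \<Longrightarrow> B \<le> \<mu> p" "q \<noteq> 0 \<Longrightarrow> B \<le> \<mu> q"
  shows "B \<le> \<mu> (p + q)"
proof (cases "p = 0 \<or> q = 0")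
  case True
  then show ?thesis using assms by auto
next
  case False
  then have "min (\<mu> p) (\<mu> q) \<le> \<mu> (p + q)"
    using val assms(1) by (simp add: krull_valuation_def)
  then show ?thesis using assms False by (auto simp: min_def split: if_splits)
qed

lemma val_one [simp]: "\<mu> 1 = 0"
  using val_mult[of 1 1] by simp

lemma val_const_one [simp]: "\<mu> [:1:] = 0"
  by (simp flip: one_pCons)

lemma val_minus [simp]: "\<mu> (- p) = \<mu> p"
proof (cases "p = 0")
  case False
  have "\<mu> (-1) + \<mu> (-1) = 0"
    using val_mult[of "-1" "-1"] by simp
  then have "\<mu> (-1) = 0"
    by (metis add_pos_pos add_neg_neg less_irrefl linorder_neqE)
  then show ?thesis using val_mult[of "-1" p] False by simp
qed simp

lemma val_add_eq_left:
  assumes "p \<noteq> 0" "q \<noteq> 0" "\<mu> p < \<mu> q"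
  shows "\<mu> (p + q) = \<mu> p"
proof -
  have pq: "p + q \<noteq> 0"
    using assms by (metis add_eq_0_iff less_irrefl val_minus)
  have "\<mu> p \<le> \<mu> (p + q)"
    by (rule val_add_ge) (use assms pq in auto)
  moreover have "min (\<mu> (p + q)) (\<mu> q) \<le> \<mu> p"
    using val_add_ge[of "p + q" "- q" "min (\<mu> (p + q)) (\<mu> q)"] assms by simp
  ultimately show ?thesis using assms(3) by (auto simp: min_def split: if_splits)
qed

lemma val_const_diff_ge:
  assumes "b \<noteq> r"
  shows "min (\<mu> [:-r, 1:]) (\<mu> [:-b, 1:]) \<le> \<mu> [:b - r:]"
proof -
  have "[:b - r:] = [:-r, 1:] + - [:-b, 1:]"
    by simp
  then show ?thesis
    using val_add_ge[of "[:-r, 1:]" "- [:-b, 1:]"] val_minus[of "[:-b, 1:]"] assms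
    by (simp del: val_minus)
qed

lemma val_const_diff_eq:
  assumes "\<mu> [:-r, 1:] < \<mu> [:-a, 1:]"
  shows "\<mu> [:a - r:] = \<mu> [:-r, 1:]"
proof -
  have "[:a - r:] = [:-r, 1:] + - [:-a, 1:]"
    by simp
  then show ?thesis
    using val_add_eq_left[of "[:-r, 1:]" "- [:-a, 1:]"] val_minus[of "[:-a, 1:]"] assms
    by (simp del: val_minus)
qed

lemma val_const_inverse: "c \<noteq> 0 \<Longrightarrow> \<mu> [:inverse c:] = - \<mu> [:c:]"
  using val_mult[of "[:inverse c:]" "[:c:]"] by (simp add: eq_neg_iff_add_eq_0)

end

text \<open>\<open>B\<close> is a lower bound for the Gauss valuation \<open>min\<^sub>i (\<mu>(c\<^sub>i) + i\<cdot>l)\<close> of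
  \<open>p = \<Sum> c\<^sub>i x\<^sup>i\<close>; stating bounds instead of taking the minimum avoids \<open>Min {}\<close> at \<open>p = 0\<close>.\<close>
definition gauss_ge :: "('k::field poly \<Rightarrow> 'g::linordered_ab_group_add) \<Rightarrow> 'g \<Rightarrow> 'g \<Rightarrow> 'k poly \<Rightarrow> bool" where
  "gauss_ge \<mu> l B p \<longleftrightarrow> (\<forall>i. coeff p i \<noteq> 0 \<longrightarrow> B \<le> \<mu> [:coeff p i:] + nsmul i l)"

lemma gauss_ge_0 [simp]: "gauss_ge \<mu> l B 0"
  by (simp add: gauss_ge_def)

lemma gauss_ge_pCons_iff:
  "gauss_ge \<mu> l B (pCons c p) \<longleftrightarrow> (c \<noteq> 0 \<longrightarrow> B \<le> \<mu> [:c:]) \<and> gauss_ge \<mu> l (B - l) p"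
  unfolding gauss_ge_def
  by (auto simp: coeff_pCons diff_le_eq add.assoc split: nat.splits)

lemma gauss_ge_const_iff: "gauss_ge \<mu> l B [:c:] \<longleftrightarrow> (c \<noteq> 0 \<longrightarrow> B \<le> \<mu> [:c:])"
  by (simp add: gauss_ge_pCons_iff)

lemma gauss_ge_mono: "B' \<le> B \<Longrightarrow> gauss_ge \<mu> l B p \<Longrightarrow> gauss_ge \<mu> l B' p"
  unfolding gauss_ge_def by (meson order_trans)

context
  fixes \<mu> :: "'k::field poly \<Rightarrow> 'g::linordered_ab_group_add"
  assumes val: "krull_valuation \<mu>"
begin

lemma gauss_ge_add: "gauss_ge \<mu> l B p \<Longrightarrow> gauss_ge \<mu> l B q \<Longrightarrow> gauss_ge \<mu> l B (p + q)"
  unfolding gauss_ge_def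
proof (intro allI impI)
  fix i
  assume p: "\<forall>i. coeff p i \<noteq> 0 \<longrightarrow> B \<le> \<mu> [:coeff p i:] + nsmul i l"
    and q: "\<forall>i. coeff q i \<noteq> 0 \<longrightarrow> B \<le> \<mu> [:coeff q i:] + nsmul i l"
    and "coeff (p + q) i \<noteq> 0"
  then have "B - nsmul i l \<le> \<mu> ([:coeff p i:] + [:coeff q i:])"
    by (intro val_add_ge[OF val]) (auto simp: diff_le_eq)
  then show "B \<le> \<mu> [:coeff (p + q) i:] + nsmul i l"
    by (simp add: diff_le_eq)
qed

lemma gauss_ge_smult:
  assumes "c \<noteq> 0" "gauss_ge \<mu> l B p"
  shows "gauss_ge \<mu> l (\<mu> [:c:] + B) (smult c p)"
  unfolding gauss_ge_def
proof (intro allI impI)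
  fix i assume "coeff (smult c p) i \<noteq> 0"
  then have "coeff p i \<noteq> 0" by simp
  then have "\<mu> [:c:] + B \<le> \<mu> [:c:] + (\<mu> [:coeff p i:] + nsmul i l)"
    using assms(2) by (simp add: gauss_ge_def)
  also have "\<dots> = \<mu> [:coeff (smult c p) i:] + nsmul i l"
    using val_mult[OF val, of "[:c:]" "[:coeff p i:]"] assms(1) \<open>coeff p i \<noteq> 0\<close>
    by (simp add: add.assoc mult.commute)
  finally show "\<mu> [:c:] + B \<le> \<mu> [:coeff (smult c p) i:] + nsmul i l" .
qed

lemma gauss_ge_mult: "gauss_ge \<mu> l B p \<Longrightarrow> gauss_ge \<mu> l C q \<Longrightarrow> gauss_ge \<mu> l (B + C) (p * q)"
proof (induction p arbitrary: B)
  case (pCons c p)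
  have "gauss_ge \<mu> l (B + C) (smult c q)"
  proof (cases "c = 0")
    case False
    then show ?thesis
      using gauss_ge_smult[OF False pCons.prems(2)] pCons.prems(1)
      by (auto simp: gauss_ge_pCons_iff elim!: gauss_ge_mono[rotated])
  qed simp
  moreover have "gauss_ge \<mu> l (B - l + C) (p * q)"
    using pCons by (simp add: gauss_ge_pCons_iff)
  then have "gauss_ge \<mu> l (B + C) (pCons 0 (p * q))"
    by (simp add: gauss_ge_pCons_iff algebra_simps)
  ultimately show ?case
    by (simp add: gauss_ge_add)
qed simp

lemma gauss_ge_mult_minus_one:
  assumes "0 < B" "0 < C" "gauss_ge \<mu> l B (p - 1)" "gauss_ge \<mu> l C (q - 1)"
  shows "gauss_ge \<mu> l (min B C) (p * q - 1)"
proof -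
  have "p * q - 1 = (p - 1) * (q - 1) + (p - 1) + (q - 1)"
    by (simp add: algebra_simps)
  moreover have "gauss_ge \<mu> l (min B C) ((p - 1) * (q - 1))"
    using gauss_ge_mult[OF assms(3,4)] assms(1,2)
    by (auto elim!: gauss_ge_mono[rotated] simp: min_def)
  moreover have "gauss_ge \<mu> l (min B C) (p - 1)" "gauss_ge \<mu> l (min B C) (q - 1)"
    using assms(3,4) by (auto elim: gauss_ge_mono[rotated])
  ultimately show ?thesis
    by (metis gauss_ge_add)
qed

lemma val_pcompose_ge:
  assumes "gauss_ge \<mu> (\<mu> r) B p" "r \<noteq> 0" "pcompose p r \<noteq> 0"
  shows "B \<le> \<mu> (pcompose p r)"
  using assms(1,3)
proof (induction p arbitrary: B)
  case (pCons c p)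
  show ?case
    unfolding pcompose_pCons
  proof (rule val_add_ge[OF val])
    show "[:c:] + r * pcompose p r \<noteq> 0"
      using pCons.prems(2) by (simp add: pcompose_pCons)
    show "[:c:] \<noteq> 0 \<Longrightarrow> B \<le> \<mu> [:c:]"
      using pCons.prems(1) by (simp add: gauss_ge_pCons_iff)
  next
    assume "r * pcompose p r \<noteq> 0"
    then have "B - \<mu> r \<le> \<mu> (pcompose p r)" and "pcompose p r \<noteq> 0"
      using pCons by (auto simp: gauss_ge_pCons_iff)
    then show "B \<le> \<mu> (r * pcompose p r)"
      using val_mult[OF val assms(2)] by (simp add: diff_le_eq add.commute)
  qed
qed simp

end

lemma trunc_val_ge_iff:
  assumes "g \<noteq> 0"
  shows "B \<le> trunc_val \<mu> a g \<longleftrightarrow> gauss_ge \<mu> (\<mu> [:-a, 1:]) B (pcompose g [:a, 1:])"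
proof -
  let ?p = "pcompose g [:a, 1:]"
  let ?t = "\<lambda>i. \<mu> [:coeff ?p i:] + nsmul i (\<mu> [:-a, 1:])"
  let ?S = "{?t i |i. i \<le> degree g \<and> coeff ?p i \<noteq> 0}"
  have deg: "degree ?p = degree g"
    by (simp add: degree_pcompose)
  moreover have "?p \<noteq> 0"
    using assms by (simp add: pcompose_eq_0_iff)
  ultimately have "coeff ?p (degree g) \<noteq> 0"
    by (metis leading_coeff_0_iff)
  then have "?S \<noteq> {}"
    by blast
  moreover have "finite ?S"
    by (rule finite_subset[of _ "?t ` {..degree g}"]) auto
  ultimately have "B \<le> trunc_val \<mu> a g \<longleftrightarrow> (\<forall>x\<in>?S. B \<le> x)"
    unfolding trunc_val_def by (simp add: Min_ge_iff)
  also have "\<dots> \<longleftrightarrow> gauss_ge \<mu> (\<mu> [:-a, 1:]) B ?p"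
    unfolding gauss_ge_def using le_degree[of ?p] deg by fastforce
  finally show ?thesis .
qed

lemma trunc_val_le_val:
  assumes val: "krull_valuation \<mu>" and "g \<noteq> 0"
  shows "trunc_val \<mu> a g \<le> \<mu> g"
proof -
  have "pcompose (pcompose g [:a, 1:]) [:-a, 1:] = g"
    by (simp flip: pcompose_assoc add: pcompose_pCons)
  moreover have "gauss_ge \<mu> (\<mu> [:-a, 1:]) (trunc_val \<mu> a g) (pcompose g [:a, 1:])"
    using trunc_val_ge_iff[OF assms(2)] by blast
  ultimately show ?thesis
    using val_pcompose_ge[OF val] assms(2) by fastforce
qed

lemma trunc_val_smult:
  assumes val: "krull_valuation \<mu>" and "c \<noteq> 0" "p \<noteq> 0"
  shows "trunc_val \<mu> a (smult c p) = \<mu> [:c:] + trunc_val \<mu> a p"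
proof -
  have ge: "\<mu> [:d:] + trunc_val \<mu> a q \<le> trunc_val \<mu> a (smult d q)" if "d \<noteq> 0" "q \<noteq> 0" for d q
    using gauss_ge_smult[OF val that(1) trunc_val_ge_iff[OF that(2), THEN iffD1, OF order_refl]]
      trunc_val_ge_iff[of "smult d q" _ \<mu> a] that by (simp add: pcompose_smult)
  \<comment> \<open>the reverse inequality is the same one for \<open>inverse c\<close>\<close>
  have "\<mu> [:inverse c:] + trunc_val \<mu> a (smult c p) \<le> trunc_val \<mu> a p"
    using ge[of "inverse c" "smult c p"] assms by simp
  then show ?thesis
    using ge[of c p] assms val_const_inverse[OF val assms(2)]
    by (simp add: order_antisym add.commute le_diff_eq diff_le_eq flip: diff_conv_add_uminus)
qed

lemma trunc_val_one_unit:
  assumes val: "krull_valuation \<mu>" and "0 < B" "0 < degree p" "poly p a = 1"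
    and "gauss_ge \<mu> (\<mu> [:-a, 1:]) B (pcompose p [:a, 1:] - 1)"
  shows "trunc_val \<mu> a p = 0" and "0 < trunc_val \<mu> a (p - 1)"
proof -
  let ?l = "\<mu> [:-a, 1:]" and ?h = "pcompose p [:a, 1:]"
  have p0: "p \<noteq> 0" and p1: "p - 1 \<noteq> 0"
    using assms(3) by auto
  have "gauss_ge \<mu> ?l 0 ((?h - 1) + 1)"
    using assms(2,5)
    by (intro gauss_ge_add[OF val])
      (auto simp: val_const_one[OF val] gauss_ge_const_iff one_pCons elim: gauss_ge_mono[rotated])
  then have "0 \<le> trunc_val \<mu> a p"
    using trunc_val_ge_iff[OF p0, of _ \<mu> a] by simp
  moreover have "coeff ?h 0 = 1"
    using assms(4) by (simp add: pcompose_coeff_0)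
  then have "trunc_val \<mu> a p \<le> 0"
    using trunc_val_ge_iff[OF p0, of "trunc_val \<mu> a p" \<mu> a]
    by (auto simp: gauss_ge_def val_const_one[OF val] dest: spec[of _ 0])
  ultimately show "trunc_val \<mu> a p = 0"
    by simp
  have "B \<le> trunc_val \<mu> a (p - 1)"
    using trunc_val_ge_iff[OF p1, of B \<mu> a] assms(5) by (simp add: pcompose_diff pcompose_1)
  with assms(2) show "0 < trunc_val \<mu> a (p - 1)"
    by simp
qed

lemma trunc_val_eq_val:
  fixes \<mu> :: "'k::alg_closed_field poly \<Rightarrow> 'g::linordered_ab_group_add"
  assumes val: "krull_valuation \<mu>" and "Q \<noteq> 0"
    and "\<forall>r. poly Q r = 0 \<longrightarrow> \<mu> [:-r, 1:] \<le> \<mu> [:-b, 1:]"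
  shows "trunc_val \<mu> b Q = \<mu> Q"
proof -
  let ?l = "\<mu> [:-b, 1:]"
  have "gauss_ge \<mu> ?l (\<mu> Q) (pcompose Q [:b, 1:])"
    using assms(2,3)
  proof (induct Q rule: linear_factor_induct)
    case (const c)
    then show ?case by (simp add: gauss_ge_const_iff)
  next
    case (linear r q)
    have "b \<noteq> r \<Longrightarrow> \<mu> [:-r, 1:] \<le> \<mu> [:b - r:]"
      using val_const_diff_ge[OF val, of b r] linear.hyps(1) by (simp add: min_absorb1)
    then have "gauss_ge \<mu> ?l (\<mu> [:-r, 1:]) [:b - r, 1:]"
      using linear.hyps(1) by (simp add: gauss_ge_pCons_iff val_const_one[OF val])
    from gauss_ge_mult[OF val this linear.hyps(3)]
    show ?case
      using val_mult[OF val, of "[:-r, 1:]" q] linear.hyps(2)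
      by (simp only: pcompose_mult pcompose_linear pCons_eq_0_iff one_neq_zero) simp
  qed
  then have "\<mu> Q \<le> trunc_val \<mu> b Q"
    by (rule trunc_val_ge_iff[OF assms(2), THEN iffD2])
  with trunc_val_le_val[OF val assms(2)] show ?thesis
    by (rule order_antisym)
qed

lemma normalized_shift_one_unit:
  fixes \<mu> :: "'k::alg_closed_field poly \<Rightarrow> 'g::linordered_ab_group_add"
  assumes val: "krull_valuation \<mu>" and "g \<noteq> 0"
    and "\<forall>r. poly g r = 0 \<longrightarrow> \<mu> [:-r, 1:] < \<mu> [:-a, 1:]"
  shows "poly g a \<noteq> 0 \<and> \<mu> g = \<mu> [:poly g a:] \<and>
    (let h = pcompose (smult (inverse (poly g a)) g) [:a, 1:]
     in h = 1 \<or> (\<exists>B>0. gauss_ge \<mu> (\<mu> [:-a, 1:]) B (h - 1)))"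
  using assms(2,3)
proof (induct g rule: linear_factor_induct)
  case (const c)
  \<comment> \<open>no positive bound need exist here: the value group may be trivial\<close>
  then show ?case by (simp add: Let_def pcompose_1 flip: one_pCons)
next
  case (linear r q)
  let ?l = "\<mu> [:-a, 1:]"
  define e where "e = inverse (a - r)"
  define hq where "hq = pcompose (smult (inverse (poly q a)) q) [:a, 1:]"
  have ar: "a \<noteq> r"
    using linear.hyps(1) by auto
  have qa: "poly q a \<noteq> 0" and mq: "\<mu> q = \<mu> [:poly q a:]"
    and hq: "hq = 1 \<or> (\<exists>B>0. gauss_ge \<mu> ?l B (hq - 1))"
    using linear.hyps(3) by (simp_all add: hq_def Let_def)
  have mar: "\<mu> [:a - r:] = \<mu> [:-r, 1:]"
    by (rule val_const_diff_eq[OF val linear.hyps(1)])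
  have ga: "poly ([:-r, 1:] * q) a = (a - r) * poly q a"
    by (simp add: algebra_simps)
  have mg: "\<mu> ([:-r, 1:] * q) = \<mu> [:(a - r) * poly q a:]"
    using val_mult[OF val, of "[:-r, 1:]" q] val_mult[OF val, of "[:a - r:]" "[:poly q a:]"]
      linear.hyps(2) ar qa mar mq by (simp add: mult.commute)
  have hg: "pcompose (smult (inverse ((a - r) * poly q a)) ([:-r, 1:] * q)) [:a, 1:]
      = [:1, e:] * hq"
    unfolding e_def hq_def by (rule pcompose_normalized_linear_factor[OF ar])
  have "\<exists>B>0. gauss_ge \<mu> ?l B ([:1, e:] * hq - 1)"
  proof -
    have "0 < \<mu> [:e:] + ?l"
      using val_const_inverse[OF val, of "a - r"] ar mar linear.hyps(1)
      by (simp add: e_def)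
    moreover have "gauss_ge \<mu> ?l (\<mu> [:e:] + ?l) ([:1, e:] - 1)"
    proof -
      have "[:1, e:] - 1 = pCons 0 [:e:]"
        by (simp add: one_pCons)
      then show ?thesis
        by (simp add: gauss_ge_pCons_iff)
    qed
    ultimately show ?thesis
      using hq gauss_ge_mult_minus_one[OF val] by (metis min_less_iff_conj mult.right_neutral)
  qed
  then show ?case
    unfolding Let_def ga hg mg using ar qa by simp
qed

lemma trunc_val_at_dominant_point:
  fixes \<mu> :: "'k::alg_closed_field poly \<Rightarrow> 'g::linordered_ab_group_add"
  assumes val: "krull_valuation \<mu>" and "0 < degree g"
    and "\<forall>r. poly g r = 0 \<longrightarrow> \<mu> [:-r, 1:] < \<mu> [:-a, 1:]"
  shows "poly g a \<noteq> 0 \<and> trunc_val \<mu> a g = \<mu> g \<and> \<mu> g = \<mu> [:poly g a:] \<and>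
    trunc_val \<mu> a (smult (inverse (poly g a)) g) = 0 \<and>
    0 < trunc_val \<mu> a (smult (inverse (poly g a)) g - 1)"
proof -
  let ?g' = "smult (inverse (poly g a)) g"
  have g0: "g \<noteq> 0"
    using assms(2) by auto
  have ga: "poly g a \<noteq> 0" and mg: "\<mu> g = \<mu> [:poly g a:]"
    and "pcompose ?g' [:a, 1:] = 1 \<or>
      (\<exists>B>0. gauss_ge \<mu> (\<mu> [:-a, 1:]) B (pcompose ?g' [:a, 1:] - 1))"
    using normalized_shift_one_unit[OF val g0 assms(3)] by (simp_all add: Let_def)
  moreover have deg: "degree ?g' = degree g"
    using ga by simp
  then have "degree (pcompose ?g' [:a, 1:]) = degree g"
    by (simp add: degree_pcompose)
  then have "pcompose ?g' [:a, 1:] \<noteq> 1"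
    using assms(2) by auto
  ultimately obtain B where "0 < B" "gauss_ge \<mu> (\<mu> [:-a, 1:]) B (pcompose ?g' [:a, 1:] - 1)"
    by blast
  from trunc_val_one_unit[OF val this(1) _ _ this(2)] deg assms(2) ga
  have "trunc_val \<mu> a ?g' = 0" "0 < trunc_val \<mu> a (?g' - 1)"
    by simp_all
  moreover have "trunc_val \<mu> a g = \<mu> [:poly g a:] + trunc_val \<mu> a ?g'"
    using trunc_val_smult[OF val ga, of ?g' a] ga g0 by simp
  ultimately show ?thesis
    using ga mg by simp
qed

lemma val_root_le_delta:
  assumes "g \<noteq> 0" "poly g r = 0"
  shows "\<mu> [:-r, 1:] \<le> delta \<mu> g"
  unfolding delta_def using assms poly_roots_finite[OF assms(1)] by (intro Max_ge) auto

theorem lemma2p12: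
  fixes \<mu> :: "'k::alg_closed_field poly \<Rightarrow> 'g::linordered_ab_group_add"
    and f :: "'k poly" and a :: 'k
  assumes val: "krull_valuation \<mu>"
    and f_nonconst: "0 < degree f"
    and opt: "optimizing_root \<mu> f a"
  shows "(\<forall>g :: 'k poly. 0 < degree g \<and> delta \<mu> g < delta \<mu> f \<longrightarrow>
            poly g a \<noteq> 0 \<and>
            trunc_val \<mu> a g = \<mu> g \<and> \<mu> g = \<mu> [:poly g a:] \<and>
            trunc_val \<mu> a (smult (inverse (poly g a)) g) = 0 \<and>
            0 < trunc_val \<mu> a (smult (inverse (poly g a)) g - 1))
       \<and> (\<forall>(K :: 'k set) (Q :: 'k poly) (b :: 'k).
            subfield K \<and> algebraic_over K \<and> Q \<in> polys_over K \<and>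
            key_polynomial \<mu> K Q \<and> 0 < degree Q \<and> optimizing_root \<mu> Q b \<longrightarrow>
            trunc_val \<mu> b Q = \<mu> Q)"
proof (rule conjI; intro allI impI; elim conjE)
  fix g :: "'k poly"
  assume "0 < degree g" "delta \<mu> g < delta \<mu> f"
  moreover from this have "\<forall>r. poly g r = 0 \<longrightarrow> \<mu> [:-r, 1:] < \<mu> [:-a, 1:]"
    using opt val_root_le_delta[of g _ \<mu>] by (fastforce simp: optimizing_root_def intro: le_less_trans)
  ultimately show "poly g a \<noteq> 0 \<and> trunc_val \<mu> a g = \<mu> g \<and> \<mu> g = \<mu> [:poly g a:] \<and>
    trunc_val \<mu> a (smult (inverse (poly g a)) g) = 0 \<and>
    0 < trunc_val \<mu> a (smult (inverse (poly g a)) g - 1)"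
    by (intro trunc_val_at_dominant_point[OF val])
next
  \<comment> \<open>only the optimizing root is used\<close>
  fix Q :: "'k poly" and b :: 'k
  assume "0 < degree Q" "optimizing_root \<mu> Q b"
  then have Q0: "Q \<noteq> 0"
    by auto
  with \<open>optimizing_root \<mu> Q b\<close> have "\<forall>r. poly Q r = 0 \<longrightarrow> \<mu> [:-r, 1:] \<le> \<mu> [:-b, 1:]"
    using val_root_le_delta[OF Q0] by (auto simp: optimizing_root_def)
  then show "trunc_val \<mu> b Q = \<mu> Q"
    by (rule trunc_val_eq_val[OF val Q0])
qed

end
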